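(* Let $d=3$, $k\ge2$, and let the discrete spaces and bilinear forms be as in the context. Let $(\sigma_h,\lambda_h)\in\Sigma_h^{k-1}\times S_h^{k+1}$ satisfy $b(\sigma_h,\operatorname{curl}(\phi_h))+b^g(\phi_h,\lambda_h)=0$ for all $\phi_h\in W_h^k$. Then \[\|\sigma_h\|_{L^2}^2+\|\nabla\lambda_h\|_{L^2}^2\lesssim\nu\,a(\sigma_h,\sigma_h).\]
   Context: $\Omega\subset\mathbb{R}^3$ bounded simply connected Lipschitz domain, $\nu>0$ constant. $\mathcal{T}$ shape-regular quasi-uniform tetrahedral triangulation with mesh size $h$, $\mathcal{F}$ its facets (interior and boundary); on facets $n$ is a unit normal (outward on $\partial\Omega$), $[\![\cdot]\!]$ the jump (the trace on boundary facets). For vectors $v_t:=v-(v\cdot n)n$; for matrices $\tau_{nn}:=n^T\tau n$, $\tau_{nt}:=\tau n-\tau_{nn}n$. $\mathcal{P}^k(\mathcal{T},X)$: piecewise polynomials of degree $\le k$. Spaces: $S_h^k:=\mathcal{P}^k(\mathcal{T},\mathbb{R})\cap H_0^1(\Omega)$; $W_h^k:=\mathcal{P}^k(\mathcal{T},\mathbb{R}^3)\cap H_0(\operatorname{curl},\Omega)$; $\Sigma_h^k:=\{\sigma_h\in\mathcal{P}^k(\mathcal{T},\mathbb{R}^{3\times3}):\operatorname{tr}\sigma_h=0,\ [\![(\sigma_h)_{nt}]\!]=0 \text{ and } (\sigma_h)_{nt}|_F\in\mathcal{P}^{k-1}(F,\mathbb{R}^3)\ \forall F\}$. Forms: $a(\sigma,\tau):=\frac1\nu\int_\Omega\sigma:\tau\,dx$;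 $b(\tau,v):=-\sum_{T}\int_T\tau:\nabla v\,dx+\sum_{F}\int_F\tau_{nt}\cdot[\![v_t]\!]\,ds$; $b^g(\phi,\mu):=\int_\Omega\phi\cdot\nabla\mu\,dx$. $\lesssim$ hides constants independent of $h$ and $\nu$. *)

theory Defs
  imports "HOL-Analysis.Analysis"
begin

type_synonym pt = "real^3"
type_synonym mat3 = "real^3^3"
(* a discrete (piecewise) field is stored elementwise: element T (vertex set) \<mapsto> local polynomial *)
type_synonym 'a pw = "pt set \<Rightarrow> pt \<Rightarrow> 'a"

definition lipschitz_domain :: "pt set \<Rightarrow> bool" where
  "lipschitz_domain \<Omega> \<longleftrightarrow> open \<Omega> \<and> bounded \<Omega> \<and> connected \<Omega> \<and> \<Omega> \<noteq> {} \<and>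
     (\<forall>p\<in>frontier \<Omega>. \<exists>r>0. \<exists>Q::pt \<Rightarrow> pt. \<exists>g::real^2 \<Rightarrow> real. \<exists>L.
        orthogonal_transformation Q \<and> L-lipschitz_on UNIV g \<and>
        \<Omega> \<inter> ball p r = {x \<in> ball p r. (Q (x - p))$3 < g (vector [(Q (x - p))$1, (Q (x - p))$2])})"

definition triangulation :: "pt set \<Rightarrow> pt set set \<Rightarrow> bool" where
  "triangulation \<Omega> \<T> \<longleftrightarrow> finite \<T> \<and> \<T> \<noteq> {} \<and>
     (\<forall>T\<in>\<T>. card T = 4 \<and> \<not> affine_dependent T) \<and>
     \<Union>((\<lambda>T. convex hull T) ` \<T>) = closure \<Omega> \<and>
     (\<forall>T1\<in>\<T>. \<forall>T2\<in>\<T>. convex hull T1 \<inter> convex hull T2 = convex hull (T1 \<inter> T2))"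

definition shape_regular :: "real \<Rightarrow> pt set set \<Rightarrow> bool" where
  "shape_regular \<rho> \<T> \<longleftrightarrow> (\<forall>T\<in>\<T>. \<exists>x r. ball x r \<subseteq> convex hull T \<and> diameter T \<le> \<rho> * r)"

definition mesh_size :: "pt set set \<Rightarrow> real" where
  "mesh_size \<T> = Max (diameter ` \<T>)"

definition quasi_uniform :: "real \<Rightarrow> pt set set \<Rightarrow> bool" where
  "quasi_uniform \<rho> \<T> \<longleftrightarrow> (\<forall>T\<in>\<T>. mesh_size \<T> \<le> \<rho> * diameter T)"

definition facets :: "pt set set \<Rightarrow> pt set set" where
  "facets \<T> = {F. \<exists>T\<in>\<T>. F \<subseteq> T \<and> card F = 3}"

definition elems_of :: "pt set set \<Rightarrow> pt set \<Rightarrow> pt set set" where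
  "elems_of \<T> F = {T\<in>\<T>. F \<subseteq> T}"

definition interior_facet :: "pt set set \<Rightarrow> pt set \<Rightarrow> bool" where
  "interior_facet \<T> F \<longleftrightarrow> F \<in> facets \<T> \<and> card (elems_of \<T> F) = 2"

definition boundary_facet :: "pt set set \<Rightarrow> pt set \<Rightarrow> bool" where
  "boundary_facet \<T> F \<longleftrightarrow> F \<in> facets \<T> \<and> card (elems_of \<T> F) = 1"

definition fverts :: "pt set \<Rightarrow> pt \<times> pt \<times> pt" where
  "fverts F = (SOME (a,b,c). F = {a,b,c})"

definition outward_normal :: "pt set \<Rightarrow> pt set \<Rightarrow> pt" where
  "outward_normal T F = (case fverts F of (a,b,c) \<Rightarrow>
     let m = cross3 (b - a) (c - a); n0 = (1 / norm m) *\<^sub>R m; p = (THE p. p \<in> T - F)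
     in if n0 \<bullet> (p - a) > 0 then - n0 else n0)"

text \<open>the element fixing the orientation of a facet, and the facet normal n_F
  (outward on boundary facets)\<close>
definition ref_elem :: "pt set set \<Rightarrow> pt set \<Rightarrow> pt set" where
  "ref_elem \<T> F = (SOME T. T \<in> \<T> \<and> F \<subseteq> T)"

definition facet_normal :: "pt set set \<Rightarrow> pt set \<Rightarrow> pt" where
  "facet_normal \<T> F = outward_normal (ref_elem \<T> F) F"

text \<open>surface integral over a triangular facet (2-dim. Hausdorff measure via affine parametrization)\<close>
definition facet_integral :: "pt set \<Rightarrow> (pt \<Rightarrow> real) \<Rightarrow> real" where
  "facet_integral F f = (case fverts F of (a,b,c) \<Rightarrow>
     integral {(s,t). 0 \<le> s \<and> 0 \<le> t \<and> s + t \<le> 1}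
       (\<lambda>(s,t). f (a + s *\<^sub>R (b - a) + t *\<^sub>R (c - a))) * norm (cross3 (b - a) (c - a)))"

definition poly_deg :: "nat \<Rightarrow> (pt \<Rightarrow> real) \<Rightarrow> bool" where
  "poly_deg k p \<longleftrightarrow> (\<exists>c :: nat \<Rightarrow> nat \<Rightarrow> nat \<Rightarrow> real. \<forall>x.
     p x = (\<Sum>i\<le>k. \<Sum>j\<le>k. \<Sum>l\<le>k. if i + j + l \<le> k then c i j l * (x$1)^i * (x$2)^j * (x$3)^l else 0))"

definition vpoly_deg :: "nat \<Rightarrow> (pt \<Rightarrow> real^3) \<Rightarrow> bool" where
  "vpoly_deg k v \<longleftrightarrow> (\<forall>i. poly_deg k (\<lambda>x. v x $ i))"

definition mpoly_deg :: "nat \<Rightarrow> (pt \<Rightarrow> mat3) \<Rightarrow> bool" where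
  "mpoly_deg k v \<longleftrightarrow> (\<forall>i j. poly_deg k (\<lambda>x. v x $ i $ j))"

definition grad :: "(pt \<Rightarrow> real) \<Rightarrow> pt \<Rightarrow> real^3" where
  "grad p x = (\<chi> j. frechet_derivative p (at x) (axis j 1))"

definition jac :: "(pt \<Rightarrow> real^3) \<Rightarrow> pt \<Rightarrow> mat3" where
  "jac v x = (\<chi> i j. frechet_derivative (\<lambda>y. v y $ i) (at x) (axis j 1))"

definition curl :: "(pt \<Rightarrow> real^3) \<Rightarrow> pt \<Rightarrow> real^3" where
  "curl v x = (let J = jac v x in vector [J$3$2 - J$2$3, J$1$3 - J$3$1, J$2$1 - J$1$2])"

definition tang :: "pt \<Rightarrow> real^3 \<Rightarrow> real^3" where
  "tang n v = v - (v \<bullet> n) *\<^sub>R n"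

definition mtrace :: "mat3 \<Rightarrow> real" where
  "mtrace \<tau> = (\<Sum>i\<in>UNIV. \<tau>$i$i)"

definition nn_comp :: "pt \<Rightarrow> mat3 \<Rightarrow> real" where
  "nn_comp n \<tau> = n \<bullet> (\<tau> *v n)"

definition nt_comp :: "pt \<Rightarrow> mat3 \<Rightarrow> real^3" where
  "nt_comp n \<tau> = \<tau> *v n - nn_comp n \<tau> *\<^sub>R n"

definition frob :: "mat3 \<Rightarrow> mat3 \<Rightarrow> real" where
  "frob \<sigma> \<tau> = (\<Sum>i\<in>UNIV. \<Sum>j\<in>UNIV. \<sigma>$i$j * \<tau>$i$j)"

text \<open>S_h^k: continuous piecewise P^k, vanishing on the boundary (= P^k(T) \<inter> H^1_0)\<close>
definition S_h :: "pt set \<Rightarrow> pt set set \<Rightarrow> nat \<Rightarrow> real pw set" where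
  "S_h \<Omega> \<T> k = {\<mu>. (\<forall>T\<in>\<T>. poly_deg k (\<mu> T)) \<and>
     (\<forall>T1\<in>\<T>. \<forall>T2\<in>\<T>. \<forall>x \<in> convex hull T1 \<inter> convex hull T2. \<mu> T1 x = \<mu> T2 x) \<and>
     (\<forall>T\<in>\<T>. \<forall>x \<in> convex hull T \<inter> frontier \<Omega>. \<mu> T x = 0)}"

text \<open>W_h^k: piecewise P^k vector fields with continuous tangential traces and zero
  tangential trace on the boundary (= P^k(T) \<inter> H_0(curl))\<close>
definition W_h :: "pt set set \<Rightarrow> nat \<Rightarrow> (real^3) pw set" where
  "W_h \<T> k = {\<phi>. (\<forall>T\<in>\<T>. vpoly_deg k (\<phi> T)) \<and>
     (\<forall>F. interior_facet \<T> F \<longrightarrow> (\<forall>T1\<in>elems_of \<T> F. \<forall>T2\<in>elems_of \<T> F. \<forall>x\<in>convex hull F.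
         tang (facet_normal \<T> F) (\<phi> T1 x) = tang (facet_normal \<T> F) (\<phi> T2 x))) \<and>
     (\<forall>F. boundary_facet \<T> F \<longrightarrow> (\<forall>T\<in>elems_of \<T> F. \<forall>x\<in>convex hull F.
         tang (facet_normal \<T> F) (\<phi> T x) = 0))}"

definition Sigma_h :: "pt set set \<Rightarrow> nat \<Rightarrow> mat3 pw set" where
  "Sigma_h \<T> k = {\<sigma>. (\<forall>T\<in>\<T>. mpoly_deg k (\<sigma> T) \<and> (\<forall>x. mtrace (\<sigma> T x) = 0)) \<and>
     (\<forall>F. interior_facet \<T> F \<longrightarrow> (\<forall>T1\<in>elems_of \<T> F. \<forall>T2\<in>elems_of \<T> F. \<forall>x\<in>convex hull F.
         nt_comp (facet_normal \<T> F) (\<sigma> T1 x) = nt_comp (facet_normal \<T> F) (\<sigma> T2 x))) \<and>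
     (\<forall>F\<in>facets \<T>. \<forall>T\<in>elems_of \<T> F. \<exists>q. vpoly_deg (k - 1) q \<and>
         (\<forall>x\<in>convex hull F. nt_comp (facet_normal \<T> F) (\<sigma> T x) = q x))}"

definition curl_h :: "(real^3) pw \<Rightarrow> (real^3) pw" where
  "curl_h \<phi> = (\<lambda>T. curl (\<phi> T))"

definition a_form :: "real \<Rightarrow> pt set set \<Rightarrow> mat3 pw \<Rightarrow> mat3 pw \<Rightarrow> real" where
  "a_form \<nu> \<T> \<sigma> \<tau> = (1 / \<nu>) * (\<Sum>T\<in>\<T>. integral (convex hull T) (\<lambda>x. frob (\<sigma> T x) (\<tau> T x)))"

text \<open>jump of the tangential part across F (n_F points out of ref_elem; trace on boundary facets)\<close>
definition jump_t :: "pt set set \<Rightarrow> pt set \<Rightarrow> (real^3) pw \<Rightarrow> pt \<Rightarrow> real^3" where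
  "jump_t \<T> F v x = (\<Sum>T\<in>elems_of \<T> F.
     (if T = ref_elem \<T> F then 1 else -1) *\<^sub>R tang (facet_normal \<T> F) (v T x))"

definition b_form :: "pt set set \<Rightarrow> mat3 pw \<Rightarrow> (real^3) pw \<Rightarrow> real" where
  "b_form \<T> \<tau> v =
     - (\<Sum>T\<in>\<T>. integral (convex hull T) (\<lambda>x. frob (\<tau> T x) (jac (v T) x)))
     + (\<Sum>F\<in>facets \<T>. facet_integral F
          (\<lambda>x. nt_comp (facet_normal \<T> F) (\<tau> (ref_elem \<T> F) x) \<bullet> jump_t \<T> F v x))"

definition bg_form :: "pt set set \<Rightarrow> (real^3) pw \<Rightarrow> real pw \<Rightarrow> real" where
  "bg_form \<T> \<phi> \<mu> = (\<Sum>T\<in>\<T>. integral (convex hull T) (\<lambda>x. \<phi> T x \<bullet> grad (\<mu> T) x))"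

definition L2sq_mat :: "pt set set \<Rightarrow> mat3 pw \<Rightarrow> real" where
  "L2sq_mat \<T> \<sigma> = (\<Sum>T\<in>\<T>. integral (convex hull T) (\<lambda>x. frob (\<sigma> T x) (\<sigma> T x)))"

definition L2sq_grad :: "pt set set \<Rightarrow> real pw \<Rightarrow> real" where
  "L2sq_grad \<T> \<mu> = (\<Sum>T\<in>\<T>. integral (convex hull T) (\<lambda>x. grad (\<mu> T) x \<bullet> grad (\<mu> T) x))"

end

theory Submission
  imports Defs
begin

text \<open>The test function \<open>\<phi>\<^sub>h = \<nabla>\<lambda>\<^sub>h\<close> is admissible: the gradient of a continuous
  piecewise \<open>P\<^sup>k\<^sup>+\<^sup>1\<close> function has degree \<open>k\<close>, its tangential trace is continuous
  because the difference of the two polynomials on a facet vanishes there, and it vanishes on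
  boundary facets because \<open>\<lambda>\<^sub>h\<close> vanishes on \<open>\<partial>\<Omega>\<close>, which contains every boundary facet.
  As \<open>curl \<nabla>\<lambda>\<^sub>h = 0\<close> elementwise, \<open>b(\<sigma>\<^sub>h, curl \<phi>\<^sub>h) = 0\<close>, so the orthogonality relation
  gives \<open>\<parallel>\<nabla>\<lambda>\<^sub>h\<parallel>\<^sup>2 = b\<^sup>g(\<nabla>\<lambda>\<^sub>h, \<lambda>\<^sub>h) = 0\<close>; together with \<open>\<nu> a(\<sigma>\<^sub>h, \<sigma>\<^sub>h) = \<parallel>\<sigma>\<^sub>h\<parallel>\<^sup>2\<close> the
  estimate holds with constant \<open>1\<close>; of \<open>\<Omega>\<close> only openness is used, and no mesh regularity.\<close>

section \<open>Polynomials in three variables\<close>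

type_synonym exponent = "nat \<times> nat \<times> nat"

definition monomial :: "exponent \<Rightarrow> pt \<Rightarrow> real" where
  "monomial e x = x$1 ^ fst e * x$2 ^ fst (snd e) * x$3 ^ snd (snd e)"

definition total_degree :: "exponent \<Rightarrow> nat" where
  "total_degree e = fst e + fst (snd e) + snd (snd e)"

definition exponent_of :: "3 \<Rightarrow> exponent \<Rightarrow> nat" where
  "exponent_of i e = (if i = 1 then fst e else if i = 2 then fst (snd e) else snd (snd e))"

text \<open>Truncated subtraction: lowering a zero exponent leaves it zero, which is harmless
  because in a derivative such a term carries the factor \<open>exponent_of i e = 0\<close>.\<close>
definition lower_exponent :: "3 \<Rightarrow> exponent \<Rightarrow> exponent" where
  "lower_exponent i e = (if i = 1 then (fst e - 1, snd e)
     else if i = 2 then (fst e, fst (snd e) - 1, snd (snd e))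
     else (fst e, fst (snd e), snd (snd e) - 1))"

text \<open>Exponents are indexed through a map \<open>e\<close> so that derivatives, which lower them, keep this form.\<close>
definition monomial_comb :: "('t \<Rightarrow> real) \<Rightarrow> ('t \<Rightarrow> exponent) \<Rightarrow> 't set \<Rightarrow> pt \<Rightarrow> real" where
  "monomial_comb a e S x = (\<Sum>t\<in>S. a t * monomial (e t) x)"

lemma has_derivative_vec_nth [derivative_intros]:
  "((\<lambda>x::'a::real_normed_vector^'n. x$i) has_derivative (\<lambda>h. h$i)) F"
  by (rule bounded_linear_imp_has_derivative[OF bounded_linear_vec_nth])

lemma has_derivative_monomial:
  "(monomial e has_derivative
     (\<lambda>h. \<Sum>i\<in>UNIV. real (exponent_of i e) * monomial (lower_exponent i e) x * h$i)) (at x)"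
  unfolding monomial_def
  by (rule derivative_eq_intros refl)+
     (simp add: sum_3 exponent_of_def lower_exponent_def algebra_simps)

lemma has_derivative_monomial_comb:
  assumes "finite S"
  shows "(monomial_comb a e S has_derivative
     (\<lambda>h. \<Sum>t\<in>S. a t * (\<Sum>i\<in>UNIV. real (exponent_of i (e t)) * monomial (lower_exponent i (e t)) x * h$i)))
     (at x)"
  unfolding monomial_comb_def
  by (intro has_derivative_sum has_derivative_mult_right has_derivative_monomial)

lemma sum_axis_component: "(\<Sum>j\<in>UNIV. f j * (axis i 1 :: real^'n) $ j) = f i"
  by (simp add: axis_def if_distrib[of "\<lambda>c. _ * c"] cong: if_cong)

lemma partial_derivative_monomial_comb:
  assumes "finite S"
  shows "frechet_derivative (monomial_comb a e S) (at x) (axis i 1) =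
     monomial_comb (\<lambda>t. a t * real (exponent_of i (e t))) (\<lambda>t. lower_exponent i (e t)) S x"
  unfolding frechet_derivative_at[OF has_derivative_monomial_comb[OF assms], symmetric]
  by (simp only: mult.assoc[symmetric] sum_axis_component) (simp add: monomial_comb_def mult.assoc)

lemma grad_monomial_comb:
  assumes "finite S"
  shows "(\<lambda>x. grad (monomial_comb a e S) x $ i) =
     monomial_comb (\<lambda>t. a t * real (exponent_of i (e t))) (\<lambda>t. lower_exponent i (e t)) S"
  unfolding grad_def using partial_derivative_monomial_comb[OF assms] by auto

lemma jac_grad_monomial_comb_symmetric:
  assumes "finite S"
  shows "jac (grad (monomial_comb a e S)) x $ i $ j = jac (grad (monomial_comb a e S)) x $ j $ i"
proof -
  have second: "jac (grad (monomial_comb a e S)) x $ i $ j =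
      monomial_comb (\<lambda>t. a t * real (exponent_of i (e t)) * real (exponent_of j (lower_exponent i (e t))))
        (\<lambda>t. lower_exponent j (lower_exponent i (e t))) S x" for i j
    unfolding jac_def grad_monomial_comb[OF assms] partial_derivative_monomial_comb[OF assms] by simp
  have "real (exponent_of i t) * real (exponent_of j (lower_exponent i t)) =
      real (exponent_of j t) * real (exponent_of i (lower_exponent j t))"
    and "lower_exponent j (lower_exponent i t) = lower_exponent i (lower_exponent j t)" for t
    using exhaust_3[of i] exhaust_3[of j] by (auto simp: exponent_of_def lower_exponent_def)
  then show ?thesis
    unfolding second by (simp add: mult.assoc)
qed

lemma curl_grad_monomial_comb:
  assumes "finite S"
  shows "curl (grad (monomial_comb a e S)) x = 0"
  unfolding curl_def Let_def
  by (simp add: jac_grad_monomial_comb_symmetric[OF assms, where i = 3]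
      jac_grad_monomial_comb_symmetric[OF assms, where i = 1 and j = 2] vec_eq_iff forall_3 vector_3)

lemma finite_total_degree_le: "finite {e. total_degree e \<le> K}"
  by (rule finite_subset[of _ "{..K} \<times> {..K} \<times> {..K}"]) (auto simp: total_degree_def)

lemma sum_total_degree_le:
  "(\<Sum>i\<le>K. \<Sum>j\<le>K. \<Sum>l\<le>K. if i + j + l \<le> K then f i j l else 0) =
   (\<Sum>(i, j, l)\<in>{e. total_degree e \<le> K}. f i j l)"
proof -
  have "(\<Sum>i\<le>K. \<Sum>j\<le>K. \<Sum>l\<le>K. if i + j + l \<le> K then f i j l else 0) =
      (\<Sum>(i, j, l)\<in>{..K} \<times> {..K} \<times> {..K}. if i + j + l \<le> K then f i j l else 0)"
    by (simp add: sum.cartesian_product)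
  also have "\<dots> = (\<Sum>(i, j, l)\<in>{e \<in> {..K} \<times> {..K} \<times> {..K}. total_degree e \<le> K}. f i j l)"
    by (simp add: sum.inter_filter total_degree_def case_prod_unfold)
  also have "{e \<in> {..K} \<times> {..K} \<times> {..K}. total_degree e \<le> K} = {e. total_degree e \<le> K}"
    by (auto simp: total_degree_def)
  finally show ?thesis .
qed

lemma poly_deg_iff_monomial_comb:
  "poly_deg K p \<longleftrightarrow> (\<exists>c. p = monomial_comb c id {e. total_degree e \<le> K})"
proof -
  have expand: "(\<Sum>i\<le>K. \<Sum>j\<le>K. \<Sum>l\<le>K. if i + j + l \<le> K then c (i, j, l) * x$1^i * x$2^j * x$3^l else 0) =
      monomial_comb c id {e. total_degree e \<le> K} x" for c x
    unfolding sum_total_degree_le monomial_comb_def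
    by (intro sum.cong) (auto simp: monomial_def mult.assoc)
  show ?thesis
  proof
    assume "poly_deg K p"
    then obtain c where "\<forall>x. p x = (\<Sum>i\<le>K. \<Sum>j\<le>K. \<Sum>l\<le>K.
        if i + j + l \<le> K then c i j l * x$1^i * x$2^j * x$3^l else 0)"
      unfolding poly_deg_def by blast
    then have "p = monomial_comb (\<lambda>(i, j, l). c i j l) id {e. total_degree e \<le> K}"
      using expand[of "\<lambda>(i, j, l). c i j l"] by auto
    then show "\<exists>c. p = monomial_comb c id {e. total_degree e \<le> K}" by blast
  next
    assume "\<exists>c. p = monomial_comb c id {e. total_degree e \<le> K}"
    then obtain c where "p = monomial_comb c id {e. total_degree e \<le> K}" ..
    then show "poly_deg K p"
      unfolding poly_deg_def using expand[of c] by (intro exI[of _ "\<lambda>i j l. c (i, j, l)"]) auto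
  qed
qed

lemma poly_deg_monomial_comb:
  assumes "finite S" and "\<And>t. t \<in> S \<Longrightarrow> a t \<noteq> 0 \<Longrightarrow> total_degree (e t) \<le> K"
  shows "poly_deg K (monomial_comb a e S)"
proof -
  define S' where "S' = {t \<in> S. a t \<noteq> 0}"
  define c where "c d = (\<Sum>t\<in>{t \<in> S'. e t = d}. a t)" for d
  have "monomial_comb a e S x = monomial_comb a e S' x" for x
    unfolding monomial_comb_def S'_def using assms(1) by (intro sum.mono_neutral_right) auto
  also have "\<dots> x = (\<Sum>d\<in>{d. total_degree d \<le> K}. \<Sum>t\<in>{t \<in> S'. e t = d}. a t * monomial (e t) x)" for x
    unfolding monomial_comb_def using assms
    by (intro sum.group[symmetric]) (auto simp: S'_def finite_total_degree_le)
  also have "\<dots> x = monomial_comb c id {d. total_degree d \<le> K} x" for x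
    unfolding monomial_comb_def c_def sum_distrib_right by (intro sum.cong refl) auto
  finally show ?thesis
    unfolding poly_deg_iff_monomial_comb by blast
qed

lemma total_degree_lower_exponent:
  "exponent_of i e \<noteq> 0 \<Longrightarrow> total_degree e \<le> Suc K \<Longrightarrow> total_degree (lower_exponent i e) \<le> K"
  using exhaust_3[of i]
  by (cases e) (auto simp: exponent_of_def lower_exponent_def total_degree_def)

lemma poly_deg_grad:
  assumes "poly_deg (Suc K) p"
  shows "poly_deg K (\<lambda>x. grad p x $ i)"
proof -
  obtain c where p: "p = monomial_comb c id {e. total_degree e \<le> Suc K}"
    using assms unfolding poly_deg_iff_monomial_comb by blast
  show ?thesis
    unfolding p grad_monomial_comb[OF finite_total_degree_le]
    by (rule poly_deg_monomial_comb[OF finite_total_degree_le]) (simp add: total_degree_lower_exponent)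
qed

lemma vpoly_deg_grad: "poly_deg (Suc K) p \<Longrightarrow> vpoly_deg K (grad p)"
  unfolding vpoly_deg_def by (simp add: poly_deg_grad)

lemma curl_grad_poly_deg: "poly_deg K p \<Longrightarrow> curl (grad p) x = 0"
  unfolding poly_deg_iff_monomial_comb
  using curl_grad_monomial_comb[OF finite_total_degree_le] by blast

lemma poly_deg_differentiable: "poly_deg K p \<Longrightarrow> p differentiable (at x)"
  unfolding poly_deg_iff_monomial_comb
  using has_derivative_monomial_comb[OF finite_total_degree_le] by (blast intro: differentiableI)

lemma poly_deg_continuous_on: "poly_deg K p \<Longrightarrow> continuous_on S p"
  by (meson continuous_at_imp_continuous_on differentiable_imp_continuous_within poly_deg_differentiable)

section \<open>Faces of simplices\<close>

lemma affine_independent_coeffs_unique: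
  fixes T :: "'a::real_vector set"
  assumes "finite T" "\<not> affine_dependent T" "sum u T = 1" "sum w T = 1"
    and "(\<Sum>v\<in>T. u v *\<^sub>R v) = (\<Sum>v\<in>T. w v *\<^sub>R v)" and "v \<in> T"
  shows "u v = w v"
proof (rule ccontr)
  assume "u v \<noteq> w v"
  then have "affine_dependent T"
    unfolding affine_dependent_explicit_finite[OF assms(1)] using assms(3-6)
    by (intro exI[of _ "\<lambda>v. u v - w v"]) (auto simp: sum_subtractf scaleR_diff_left)
  then show False using assms(2) by simp
qed

lemma sum_extend_by_zero:
  assumes "finite T" "F \<subseteq> T"
  shows "(\<Sum>v\<in>T. if v \<in> F then f v else 0) = sum f F"
  using sum.inter_restrict[OF assms(1), of f F] assms(2) by (simp add: Int_absorb1)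

lemma convex_hull_face_coeffs:
  fixes T :: "'a::real_vector set"
  assumes "finite T" "F \<subseteq> T" "x \<in> convex hull F"
  obtains u where "\<forall>v\<in>T. 0 \<le> u v" "\<forall>v\<in>T - F. u v = 0" "sum u T = 1" "(\<Sum>v\<in>T. u v *\<^sub>R v) = x"
proof -
  obtain w where w: "\<forall>v\<in>F. 0 \<le> w v" "sum w F = 1" "(\<Sum>v\<in>F. w v *\<^sub>R v) = x"
    using assms(3) finite_subset[OF assms(2,1)] by (auto simp: convex_hull_finite)
  show ?thesis
    using w sum_extend_by_zero[OF assms(1,2), of w] sum_extend_by_zero[OF assms(1,2), of "\<lambda>v. w v *\<^sub>R v"]
    by (intro that[of "\<lambda>v. if v \<in> F then w v else 0"]) (auto simp: if_distrib[of "\<lambda>c. c *\<^sub>R _"] cong: if_cong)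
qed

lemma rel_interior_face_subset:
  fixes T :: "'a::euclidean_space set"
  assumes T: "finite T" "\<not> affine_dependent T" and "F \<subseteq> T" "S \<subseteq> T"
    and x: "x \<in> rel_interior (convex hull F)" "x \<in> convex hull S"
  shows "F \<subseteq> S"
proof
  fix v assume "v \<in> F"
  obtain w where w: "\<forall>v\<in>F. 0 < w v" "sum w F = 1" "(\<Sum>v\<in>F. w v *\<^sub>R v) = x"
    using x(1) affine_independent_subset[OF T(2) \<open>F \<subseteq> T\<close>] by (auto simp: rel_interior_convex_hull_explicit)
  obtain u where u: "\<forall>v\<in>T - S. u v = 0" "sum u T = 1" "(\<Sum>v\<in>T. u v *\<^sub>R v) = x"
    using convex_hull_face_coeffs[OF T(1) \<open>S \<subseteq> T\<close> x(2)] by metis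
  define w' where "w' v = (if v \<in> F then w v else 0)" for v
  have "w' v = u v"
  proof (rule affine_independent_coeffs_unique[OF T])
    show "sum w' T = 1" "(\<Sum>v\<in>T. w' v *\<^sub>R v) = (\<Sum>v\<in>T. u v *\<^sub>R v)"
      using w u sum_extend_by_zero[OF T(1) \<open>F \<subseteq> T\<close>, of w]
        sum_extend_by_zero[OF T(1) \<open>F \<subseteq> T\<close>, of "\<lambda>v. w v *\<^sub>R v"]
      by (auto simp: w'_def if_distrib[of "\<lambda>c. c *\<^sub>R _"] cong: if_cong)
  qed (use u \<open>v \<in> F\<close> \<open>F \<subseteq> T\<close> in auto)
  then show "v \<in> S"
    using w(1) u(1) \<open>v \<in> F\<close> \<open>F \<subseteq> T\<close> by (force simp: w'_def)
qed

text \<open>Otherwise \<open>x\<close> would be a convex combination of \<open>T\<close> with positive weight on \<open>p\<close>.\<close>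
lemma point_beyond_face_notin_simplex:
  fixes T :: "'a::real_vector set"
  assumes T: "finite T" "\<not> affine_dependent T" and "F \<subseteq> T" "p \<in> T - F"
    and "x \<in> convex hull F" "s > 0"
  shows "x + s *\<^sub>R (x - p) \<notin> convex hull T"
proof
  assume "x + s *\<^sub>R (x - p) \<in> convex hull T"
  then obtain l where l: "\<forall>v\<in>T. 0 \<le> l v" "sum l T = 1" "(\<Sum>v\<in>T. l v *\<^sub>R v) = x + s *\<^sub>R (x - p)"
    using T(1) by (auto simp: convex_hull_finite)
  obtain u where u: "\<forall>v\<in>T - F. u v = 0" "sum u T = 1" "(\<Sum>v\<in>T. u v *\<^sub>R v) = x"
    by (rule convex_hull_face_coeffs[OF T(1) \<open>F \<subseteq> T\<close> \<open>x \<in> convex hull F\<close>]) blast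
  define m where "m v = l v / (1 + s) + (if v = p then s / (1 + s) else 0)" for v
  have p: "p \<in> T" using assms(4) by blast
  have "sum m T = (sum l T + s) / (1 + s)"
    unfolding m_def sum.distrib sum_divide_distrib[symmetric] add_divide_distrib using p T(1) by simp
  then have sum_m: "sum m T = 1"
    using l(2) \<open>s > 0\<close> by simp
  have "(\<Sum>v\<in>T. m v *\<^sub>R v) = (1 / (1 + s)) *\<^sub>R (\<Sum>v\<in>T. l v *\<^sub>R v) + (s / (1 + s)) *\<^sub>R p"
    unfolding m_def scaleR_add_left sum.distrib scaleR_sum_right
    using p T(1) by (simp add: if_distrib[of "\<lambda>c. c *\<^sub>R _"] cong: if_cong)
  also have "\<dots> = (1 / (1 + s)) *\<^sub>R ((1 + s) *\<^sub>R x)"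
    unfolding l(3) by (simp add: algebra_simps divide_inverse)
  also have "\<dots> = x"
    using \<open>s > 0\<close> by simp
  finally have "m p = u p"
    using affine_independent_coeffs_unique[OF T sum_m u(2) _ p] u(3) by simp
  moreover have "u p = 0" using u(1) assms(4) by blast
  moreover have "m p > 0" unfolding m_def using l(1) p \<open>s > 0\<close> by (simp add: add_nonneg_pos)
  ultimately show False by simp
qed

section \<open>Boundary facets lie on the boundary\<close>

lemma triangulation_element:
  assumes "triangulation \<Omega> \<T>" "T \<in> \<T>"
  shows "finite T" "card T = 4" "\<not> affine_dependent T"
  using assms unfolding triangulation_def by (auto intro: card_ge_0_finite)

lemma facet_element:
  assumes tri: "triangulation \<Omega> \<T>" and "F \<in> facets \<T>" "T \<in> elems_of \<T> F"
  shows "T \<in> \<T>" "F \<subseteq> T" "card F = 3" "\<not> affine_dependent F"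
proof -
  show T: "T \<in> \<T>" "F \<subseteq> T"
    using assms(3) unfolding elems_of_def by auto
  show "card F = 3"
    using assms(2) unfolding facets_def by blast
  show "\<not> affine_dependent F"
    using affine_independent_subset[OF triangulation_element(3)[OF tri T(1)] T(2)] .
qed

text \<open>Points just beyond \<open>F\<close> lie in \<open>\<Omega>\<close> but not in \<open>T\<close>, so they accumulate at \<open>x\<close> from the
  (closed) union of the other elements.\<close>
lemma face_point_in_other_element:
  assumes tri: "triangulation \<Omega> \<T>" and "open \<Omega>"
    and T: "T \<in> \<T>" "F \<subseteq> T" "p \<in> T - F" and x: "x \<in> convex hull F" "x \<in> \<Omega>"
  shows "\<exists>T'\<in>\<T> - {T}. x \<in> convex hull T'"
proof -
  define K where "K = (\<Union>T'\<in>\<T> - {T}. convex hull T')"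
  have "closed K"
    unfolding K_def using tri
    by (intro closed_UN ballI compact_imp_closed finite_imp_compact_convex_hull)
       (auto simp: triangulation_def intro: triangulation_element(1)[OF tri])
  define y where "y s = x + s *\<^sub>R (x - p)" for s :: real
  have y_lim: "(y \<longlongrightarrow> x) (at_right 0)"
    unfolding y_def by (auto intro!: tendsto_eq_intros)
  have "\<forall>\<^sub>F s in at_right 0. y s \<in> \<Omega>"
    using topological_tendstoD[OF y_lim \<open>open \<Omega>\<close> x(2)] .
  then have "\<forall>\<^sub>F s in at_right 0. y s \<in> K"
    using eventually_at_right_less[of "0 :: real"]
  proof eventually_elim
    case (elim s)
    have "y s \<in> closure \<Omega>" using elim closure_subset by blast
    then obtain T' where "T' \<in> \<T>" "y s \<in> convex hull T'"
      using tri unfolding triangulation_def by blast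
    moreover have "y s \<notin> convex hull T"
      unfolding y_def using elim triangulation_element[OF tri T(1)] T x(1)
      by (intro point_beyond_face_notin_simplex) auto
    ultimately show ?case unfolding K_def by blast
  qed
  then have "x \<in> K"
    using Lim_in_closed_set[OF \<open>closed K\<close> _ _ y_lim] by simp
  then show ?thesis unfolding K_def by blast
qed

lemma boundary_facet_rel_interior_in_frontier:
  assumes tri: "triangulation \<Omega> \<T>" and "open \<Omega>" and F: "boundary_facet \<T> F"
    and T: "T \<in> \<T>" "F \<subseteq> T" and x: "x \<in> rel_interior (convex hull F)"
  shows "x \<in> frontier \<Omega>"
proof (rule ccontr)
  assume "x \<notin> frontier \<Omega>"
  have x_hull: "x \<in> convex hull T"
    using x rel_interior_subset hull_mono[OF T(2)] by blast
  then have "x \<in> closure \<Omega>"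
    using tri T(1) unfolding triangulation_def by blast
  with \<open>x \<notin> frontier \<Omega>\<close> have "x \<in> \<Omega>"
    using \<open>open \<Omega>\<close> by (simp add: frontier_def interior_open)
  have "card F = 3"
    using F unfolding boundary_facet_def facets_def by blast
  then have "F \<noteq> T"
    using triangulation_element(2)[OF tri T(1)] by auto
  then obtain p where "p \<in> T - F"
    using T(2) by blast
  then obtain T' where T': "T' \<in> \<T> - {T}" "x \<in> convex hull T'"
    using face_point_in_other_element[OF tri \<open>open \<Omega>\<close> T] x rel_interior_subset \<open>x \<in> \<Omega>\<close> by blast
  have "x \<in> convex hull (T \<inter> T')"
    using tri T(1) T' x_hull unfolding triangulation_def by blast
  then have "F \<subseteq> T'"
    using rel_interior_face_subset[OF triangulation_element(1,3)[OF tri T(1)] T(2) _ x] by blast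
  then have "{T, T'} \<subseteq> elems_of \<T> F"
    using T T' unfolding elems_of_def by auto
  moreover have "finite (elems_of \<T> F)"
    using tri unfolding triangulation_def elems_of_def by simp
  ultimately have "card {T, T'} \<le> 1"
    using F card_mono unfolding boundary_facet_def by metis
  moreover have "T' \<noteq> T" using T' by blast
  ultimately show False by simp
qed

lemma S_h_poly_deg: "\<mu> \<in> S_h \<Omega> \<T> K \<Longrightarrow> T \<in> \<T> \<Longrightarrow> poly_deg K (\<mu> T)"
  unfolding S_h_def by blast

lemma S_h_agree:
  "\<mu> \<in> S_h \<Omega> \<T> K \<Longrightarrow> T1 \<in> \<T> \<Longrightarrow> T2 \<in> \<T> \<Longrightarrow> x \<in> convex hull T1 \<Longrightarrow> x \<in> convex hull T2 \<Longrightarrow>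
    \<mu> T1 x = \<mu> T2 x"
  unfolding S_h_def by blast

lemma S_h_zero_on_boundary_facet:
  assumes tri: "triangulation \<Omega> \<T>" and "open \<Omega>" and \<mu>: "\<mu> \<in> S_h \<Omega> \<T> K"
    and F: "boundary_facet \<T> F" and T: "T \<in> \<T>" "F \<subseteq> T" and z: "z \<in> convex hull F"
  shows "\<mu> T z = 0"
proof -
  have "finite F"
    using T triangulation_element(1)[OF tri] finite_subset by blast
  then have "closure (rel_interior (convex hull F)) = convex hull F"
    by (simp add: convex_closure_rel_interior compact_imp_closed finite_imp_compact_convex_hull)
  moreover have "\<mu> T y = 0" if "y \<in> rel_interior (convex hull F)" for y
  proof -
    have "y \<in> convex hull T \<inter> frontier \<Omega>"
      using boundary_facet_rel_interior_in_frontier[OF tri \<open>open \<Omega>\<close> F T that]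
        that rel_interior_subset hull_mono[OF T(2)] by blast
    then show ?thesis using \<mu> T(1) unfolding S_h_def by blast
  qed
  moreover have "continuous_on (closure (rel_interior (convex hull F))) (\<mu> T)"
    using poly_deg_continuous_on[OF S_h_poly_deg[OF \<mu> T(1)]] .
  ultimately show ?thesis
    using continuous_constant_on_closure[of "rel_interior (convex hull F)" "\<mu> T"] z by metis
qed

lemma has_derivative_grad:
  assumes "p differentiable (at x)"
  shows "(p has_derivative (\<lambda>u. grad p x \<bullet> u)) (at x)"
proof -
  let ?D = "frechet_derivative p (at x)"
  have D: "(p has_derivative ?D) (at x)"
    using assms frechet_derivative_works by blast
  interpret bounded_linear ?D
    using has_derivative_bounded_linear[OF D] .
  have "?D = (\<lambda>u. grad p x \<bullet> u)"
  proof
    fix u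
    have "?D u = ?D (\<Sum>j\<in>UNIV. u $ j *\<^sub>R axis j 1)"
      using basis_expansion[of u] by (simp add: scalar_mult_eq_scaleR)
    also have "\<dots> = (\<Sum>j\<in>UNIV. u $ j * ?D (axis j 1))"
      by (simp add: sum scaleR)
    finally show "?D u = grad p x \<bullet> u"
      unfolding grad_def inner_vec_def by (simp add: mult.commute)
  qed
  then show ?thesis using D by simp
qed

lemma has_derivative_zero_on_convex:
  fixes q :: "'a::real_normed_vector \<Rightarrow> 'b::real_normed_vector"
  assumes D: "(q has_derivative D) (at x)" and "convex S" "x \<in> S" "y \<in> S"
    and zero: "\<And>z. z \<in> S \<Longrightarrow> q z = 0"
  shows "D (y - x) = 0"
proof -
  let ?g = "\<lambda>t::real. q (x + t *\<^sub>R (y - x))"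
  have path: "((\<lambda>t::real. x + t *\<^sub>R (y - x)) has_derivative (\<lambda>t. t *\<^sub>R (y - x))) (at 0 within {0..1})"
    by (auto intro!: derivative_eq_intros)
  have "(q has_derivative D) (at ((\<lambda>t. x + t *\<^sub>R (y - x)) 0) within (\<lambda>t. x + t *\<^sub>R (y - x)) ` {0..1})"
    using D by (simp add: has_derivative_at_withinI)
  then have "(?g has_derivative (\<lambda>t. D (t *\<^sub>R (y - x)))) (at 0 within {0..1})"
    using diff_chain_within[OF path] by (simp add: o_def)
  then have "(?g has_vector_derivative D (y - x)) (at 0 within {0..1})"
    unfolding has_vector_derivative_def
    using linear_cmul[OF has_derivative_linear[OF D]] by simp
  moreover have "(?g has_vector_derivative 0) (at 0 within {0..1})"
  proof (rule has_vector_derivative_transform[OF _ _ has_vector_derivative_const])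
    show "?g t = 0" if "t \<in> {0..1}" for t
    proof -
      have "x + t *\<^sub>R (y - x) = (1 - t) *\<^sub>R x + t *\<^sub>R y" by (simp add: algebra_simps)
      then show ?thesis
        using that convexD[OF \<open>convex S\<close> \<open>x \<in> S\<close> \<open>y \<in> S\<close>, of "1 - t" t] zero by auto
    qed
  qed simp
  ultimately show ?thesis
    using vector_derivative_unique_within_closed_interval[of 0 1 0 ?g] by simp
qed

lemma cross3_cross3_right: "cross3 a (cross3 b c) = (a \<bullet> c) *\<^sub>R b - (a \<bullet> b) *\<^sub>R c"
  by (simp add: cross3_simps forall_3)

lemma orthogonal_both_imp_parallel_cross3:
  assumes "w \<bullet> u = 0" "w \<bullet> v = 0" "cross3 u v \<noteq> 0"
  shows "w = ((cross3 u v \<bullet> w) / (cross3 u v \<bullet> cross3 u v)) *\<^sub>R cross3 u v"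
proof -
  let ?m = "cross3 u v"
  have "cross3 w ?m = 0"
    unfolding cross3_cross3_right using assms(1,2) by simp
  then have parallel: "(?m \<bullet> ?m) *\<^sub>R w = (?m \<bullet> w) *\<^sub>R ?m"
    using cross3_cross3_right[of ?m w ?m] by simp
  have "w = (1 / (?m \<bullet> ?m)) *\<^sub>R ((?m \<bullet> ?m) *\<^sub>R w)"
    using assms(3) by simp
  then show ?thesis
    unfolding parallel by simp
qed

lemma tang_parallel: "c * c * (m \<bullet> m) = 1 \<Longrightarrow> tang (c *\<^sub>R m) (r *\<^sub>R m) = 0"
  unfolding tang_def by (simp add: algebra_simps)

lemma tang_diff: "tang n (v - w) = tang n v - tang n w"
  unfolding tang_def by (simp add: algebra_simps inner_diff_left)

lemma cross3_affine_independent_nonzero: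
  assumes "\<not> affine_dependent {a, b, c}" "a \<noteq> b" "a \<noteq> c" "b \<noteq> c"
  shows "cross3 (b - a) (c - a) \<noteq> 0"
proof
  assume "cross3 (b - a) (c - a) = 0"
  then have "collinear {b, a, c}"
    by (simp add: cross_eq_0 collinear_3)
  then have "collinear {a, b, c}"
    by (simp add: insert_commute)
  then show False
    using assms collinear_3_eq_affine_dependent by blast
qed

lemma outward_normal_cases:
  assumes "card F = 3"
  obtains a b c where "F = {a, b, c}" "a \<noteq> b" "a \<noteq> c" "b \<noteq> c"
    "outward_normal T F = (1 / norm (cross3 (b - a) (c - a))) *\<^sub>R cross3 (b - a) (c - a) \<or>
     outward_normal T F = (- 1 / norm (cross3 (b - a) (c - a))) *\<^sub>R cross3 (b - a) (c - a)"
proof -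
  obtain a b c where abc: "fverts F = (a, b, c)" by (cases "fverts F")
  have "\<exists>t. (\<lambda>(a, b, c). F = {a, b, c}) t"
    using assms by (auto simp: card_3_iff)
  then have F: "F = {a, b, c}"
    using someI_ex[of "\<lambda>(a, b, c). F = {a, b, c}"] abc unfolding fverts_def by auto
  then have "a \<noteq> b" "a \<noteq> c" "b \<noteq> c"
    using assms by (auto simp: card_insert_if split: if_splits)
  then show ?thesis
    by (rule that[OF F]) (auto simp: outward_normal_def abc Let_def)
qed

lemma tang_outward_normal_orthogonal_facet:
  assumes "card F = 3" "\<not> affine_dependent F" and orth: "\<And>a b. a \<in> F \<Longrightarrow> b \<in> F \<Longrightarrow> w \<bullet> (b - a) = 0"
  shows "tang (outward_normal T F) w = 0"
proof -
  obtain a b c where F: "F = {a, b, c}" "a \<noteq> b" "a \<noteq> c" "b \<noteq> c"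
    and n: "outward_normal T F = (1 / norm (cross3 (b - a) (c - a))) *\<^sub>R cross3 (b - a) (c - a) \<or>
      outward_normal T F = (- 1 / norm (cross3 (b - a) (c - a))) *\<^sub>R cross3 (b - a) (c - a)"
    using outward_normal_cases[OF assms(1)] by metis
  define m where "m = cross3 (b - a) (c - a)"
  have "m \<noteq> 0"
    unfolding m_def using cross3_affine_independent_nonzero assms(2) F by metis
  then have "w = ((m \<bullet> w) / (m \<bullet> m)) *\<^sub>R m"
    unfolding m_def using orth F by (intro orthogonal_both_imp_parallel_cross3) auto
  moreover have "c * c * (m \<bullet> m) = 1" if "c = 1 / norm m \<or> c = - 1 / norm m" for c
    using that \<open>m \<noteq> 0\<close> by (auto simp: power2_norm_eq_inner[symmetric] power2_eq_square)
  ultimately show ?thesis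
    using n tang_parallel unfolding m_def[symmetric] by metis
qed

lemma tang_grad_zero_on_facet:
  assumes "card F = 3" "\<not> affine_dependent F" and x: "x \<in> convex hull F"
    and zero: "\<And>z. z \<in> convex hull F \<Longrightarrow> q z = 0" and D: "(q has_derivative (\<lambda>u. w \<bullet> u)) (at x)"
  shows "tang (outward_normal T F) w = 0"
proof (rule tang_outward_normal_orthogonal_facet[OF assms(1,2)])
  fix a b assume "a \<in> F" "b \<in> F"
  then have "w \<bullet> (a - x) = 0" "w \<bullet> (b - x) = 0"
    using has_derivative_zero_on_convex[OF D _ x _ zero] by (auto intro: hull_inc)
  then show "w \<bullet> (b - a) = 0"
    by (simp add: inner_diff_right)
qed

section \<open>Gradients of discrete potentials\<close>

lemma has_derivative_grad_S_h:
  "\<mu> \<in> S_h \<Omega> \<T> K \<Longrightarrow> T \<in> \<T> \<Longrightarrow> (\<mu> T has_derivative (\<lambda>u. grad (\<mu> T) x \<bullet> u)) (at x)"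
  using has_derivative_grad poly_deg_differentiable S_h_poly_deg by blast

lemma tang_grad_S_h_interior_facet:
  assumes tri: "triangulation \<Omega> \<T>" and \<mu>: "\<mu> \<in> S_h \<Omega> \<T> K" and F: "F \<in> facets \<T>"
    and "T1 \<in> elems_of \<T> F" "T2 \<in> elems_of \<T> F" and x: "x \<in> convex hull F"
  shows "tang (facet_normal \<T> F) (grad (\<mu> T1) x) = tang (facet_normal \<T> F) (grad (\<mu> T2) x)"
proof -
  note T1 = facet_element[OF tri F \<open>T1 \<in> elems_of \<T> F\<close>]
    and T2 = facet_element[OF tri F \<open>T2 \<in> elems_of \<T> F\<close>]
  have zero: "\<mu> T1 z - \<mu> T2 z = 0" if "z \<in> convex hull F" for z
    using S_h_agree[OF \<mu> T1(1) T2(1)] that hull_mono[OF T1(2), of convex] hull_mono[OF T2(2), of convex]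
    by auto
  have D: "((\<lambda>z. \<mu> T1 z - \<mu> T2 z) has_derivative (\<lambda>u. (grad (\<mu> T1) x - grad (\<mu> T2) x) \<bullet> u)) (at x)"
    unfolding inner_diff_left by (intro has_derivative_diff has_derivative_grad_S_h[OF \<mu>] T1(1) T2(1))
  have "tang (facet_normal \<T> F) (grad (\<mu> T1) x - grad (\<mu> T2) x) = 0"
    unfolding facet_normal_def using tang_grad_zero_on_facet[OF T2(3,4) x zero D] .
  then show ?thesis
    unfolding tang_diff by simp
qed

lemma tang_grad_S_h_boundary_facet:
  assumes tri: "triangulation \<Omega> \<T>" and "open \<Omega>" and \<mu>: "\<mu> \<in> S_h \<Omega> \<T> K"
    and F: "boundary_facet \<T> F" and "T \<in> elems_of \<T> F" and x: "x \<in> convex hull F"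
  shows "tang (facet_normal \<T> F) (grad (\<mu> T) x) = 0"
proof -
  have "F \<in> facets \<T>"
    using F unfolding boundary_facet_def by blast
  note T = facet_element[OF tri this \<open>T \<in> elems_of \<T> F\<close>]
  have zero: "\<mu> T z = 0" if "z \<in> convex hull F" for z
    using S_h_zero_on_boundary_facet[OF tri \<open>open \<Omega>\<close> \<mu> F T(1,2) that] .
  show ?thesis
    unfolding facet_normal_def
    using tang_grad_zero_on_facet[OF T(3,4) x zero has_derivative_grad_S_h[OF \<mu> T(1)]] .
qed

lemma grad_S_h_in_W_h:
  assumes tri: "triangulation \<Omega> \<T>" and "open \<Omega>" and \<mu>: "\<mu> \<in> S_h \<Omega> \<T> (Suc k)"
  shows "(\<lambda>T. grad (\<mu> T)) \<in> W_h \<T> k"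
  unfolding W_h_def mem_Collect_eq
proof (intro conjI allI impI ballI)
  show "vpoly_deg k (grad (\<mu> T))" if "T \<in> \<T>" for T
    using vpoly_deg_grad[OF S_h_poly_deg[OF \<mu> that]] .
  show "tang (facet_normal \<T> F) (grad (\<mu> T1) x) = tang (facet_normal \<T> F) (grad (\<mu> T2) x)"
    if "interior_facet \<T> F" "T1 \<in> elems_of \<T> F" "T2 \<in> elems_of \<T> F" "x \<in> convex hull F" for F T1 T2 x
    using that tang_grad_S_h_interior_facet[OF tri \<mu>] unfolding interior_facet_def by blast
  show "tang (facet_normal \<T> F) (grad (\<mu> T) x) = 0"
    if "boundary_facet \<T> F" "T \<in> elems_of \<T> F" "x \<in> convex hull F" for F T x
    using tang_grad_S_h_boundary_facet[OF tri \<open>open \<Omega>\<close> \<mu> that] .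
qed

lemma curl_h_grad_S_h:
  assumes "\<mu> \<in> S_h \<Omega> \<T> K" "T \<in> \<T>"
  shows "curl_h (\<lambda>T. grad (\<mu> T)) T = (\<lambda>x. 0)"
  unfolding curl_h_def using curl_grad_poly_deg[OF S_h_poly_deg[OF assms]] by (simp add: fun_eq_iff)

lemma b_form_zero_right:
  assumes "\<And>T. T \<in> \<T> \<Longrightarrow> v T = (\<lambda>x. 0)"
  shows "b_form \<T> \<tau> v = 0"
proof -
  have "jac (\<lambda>x. 0) x = 0" for x
    unfolding jac_def by (simp add: vec_eq_iff)
  then have "(\<Sum>T\<in>\<T>. integral (convex hull T) (\<lambda>x. frob (\<tau> T x) (jac (v T) x))) = 0"
    using assms by (intro sum.neutral) (simp add: frob_def)
  moreover have "jump_t \<T> F v x = 0" for F x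
    unfolding jump_t_def using assms by (intro sum.neutral) (auto simp: elems_of_def tang_def)
  then have "facet_integral F (\<lambda>x. nt_comp (facet_normal \<T> F) (\<tau> (ref_elem \<T> F) x) \<bullet> jump_t \<T> F v x) = 0" for F
    unfolding facet_integral_def by (simp add: case_prod_unfold split: prod.split)
  ultimately show ?thesis
    unfolding b_form_def by simp
qed

theorem lemma5p4:
  fixes \<Omega> :: "(real^3) set" and k :: nat and \<rho> :: real
  assumes "lipschitz_domain \<Omega>" and "simply_connected \<Omega>" and "k \<ge> 2"
  shows "\<exists>C>0. \<forall>\<T> \<nu> \<sigma> \<mu>.
     triangulation \<Omega> \<T> \<and> shape_regular \<rho> \<T> \<and> quasi_uniform \<rho> \<T> \<and> \<nu> > 0 \<and>
     \<sigma> \<in> Sigma_h \<T> (k - 1) \<and> \<mu> \<in> S_h \<Omega> \<T> (k + 1) \<and>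
     (\<forall>\<phi>\<in>W_h \<T> k. b_form \<T> \<sigma> (curl_h \<phi>) + bg_form \<T> \<phi> \<mu> = 0)
     \<longrightarrow> L2sq_mat \<T> \<sigma> + L2sq_grad \<T> \<mu> \<le> C * (\<nu> * a_form \<nu> \<T> \<sigma> \<sigma>)"
proof (intro exI[of _ 1] conjI allI impI)
  fix \<T> :: "pt set set" and \<nu> :: real and \<sigma> :: "mat3 pw" and \<mu> :: "real pw"
  assume "triangulation \<Omega> \<T> \<and> shape_regular \<rho> \<T> \<and> quasi_uniform \<rho> \<T> \<and> \<nu> > 0 \<and>
     \<sigma> \<in> Sigma_h \<T> (k - 1) \<and> \<mu> \<in> S_h \<Omega> \<T> (k + 1) \<and>
     (\<forall>\<phi>\<in>W_h \<T> k. b_form \<T> \<sigma> (curl_h \<phi>) + bg_form \<T> \<phi> \<mu> = 0)"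
  then have tri: "triangulation \<Omega> \<T>" and "\<nu> > 0" and \<mu>: "\<mu> \<in> S_h \<Omega> \<T> (Suc k)"
    and orth: "\<forall>\<phi>\<in>W_h \<T> k. b_form \<T> \<sigma> (curl_h \<phi>) + bg_form \<T> \<phi> \<mu> = 0"
    by auto
  have "open \<Omega>"
    using assms(1) unfolding lipschitz_domain_def by blast
  have "b_form \<T> \<sigma> (curl_h (\<lambda>T. grad (\<mu> T))) = 0"
    using b_form_zero_right curl_h_grad_S_h[OF \<mu>] by blast
  moreover have "bg_form \<T> (\<lambda>T. grad (\<mu> T)) \<mu> = L2sq_grad \<T> \<mu>"
    unfolding bg_form_def L2sq_grad_def ..
  moreover have "b_form \<T> \<sigma> (curl_h (\<lambda>T. grad (\<mu> T))) + bg_form \<T> (\<lambda>T. grad (\<mu> T)) \<mu> = 0"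
    using orth grad_S_h_in_W_h[OF tri \<open>open \<Omega>\<close> \<mu>] by blast
  ultimately have "L2sq_grad \<T> \<mu> = 0"
    by simp
  moreover have "\<nu> * a_form \<nu> \<T> \<sigma> \<sigma> = L2sq_mat \<T> \<sigma>"
    unfolding a_form_def L2sq_mat_def using \<open>\<nu> > 0\<close> by simp
  ultimately show "L2sq_mat \<T> \<sigma> + L2sq_grad \<T> \<mu> \<le> 1 * (\<nu> * a_form \<nu> \<T> \<sigma> \<sigma>)"
    by simp
qed simp

end
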